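(* Let $(X,d)$ be a compact metric space and $f_{0,\infty}=\{f_n\}_{n=0}^\infty$ a sequence of continuous self-maps of $X$ with $f_0$ surjective. If $(X,f_{0,\infty})$ is multi-sensitive, then there exists $A\in\mathcal{S}$ such that $h^{*}(f_{0,\infty})\geq h_{A}(f_{0,\infty})\geq\log 2$, and $h_A(\hat{f}_{0,\infty})=h^{*}(\hat{f}_{0,\infty})=+\infty$.
   Context: $f_0^n=f_{n-1}\circ\cdots\circ f_0$, $f_0^0=\mathrm{id}$. $(X,f_{0,\infty})$ is multi-sensitive if there is $\delta>0$ such that for every $k\ge1$ and nonempty open $V_1,\dots,V_k\subset X$ there is $n\ge1$ with $\mathrm{diam}(f_0^n(V_i))>\delta$ for all $1\le i\le k$. $\mathcal S$ is the set of strictly increasing sequences $A=\{a_i\}_{i\ge1}$ of nonnegative integers. For a compact metric space $Z$ and continuous self-maps $g_{0,\infty}$, $h_A(g_{0,\infty})=\sup_{\mathscr A}\limsup_{n\to\infty}\frac1n\log\mathcal N(\bigvee_{i=1}^n (g_0^{a_i})^{-1}\mathscr A)$ over finite open covers ($\bigvee$ = common refinement, $\mathcal N$ = minimal cardinality of a subcover), $\log$ natural, and $h^*(g_{0,\infty})=\sup_{A\in\mathcal S}h_A(g_{0,\infty})$. $\mathcal M(X)$ is the space of Borel probability measures with the weak$^*$ topology (compact metric, e.g. via the Prohorov metric), and $\hat f_n(\mu)(B)=\mu(f_n^{-1}(B))$. *)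

theory Defs
  imports "HOL-Analysis.Analysis" "HOL-Probability.Probability"
begin

fun comp_seq :: "(nat \<Rightarrow> 'b \<Rightarrow> 'b) \<Rightarrow> nat \<Rightarrow> 'b \<Rightarrow> 'b" where
  "comp_seq f 0 = id"
| "comp_seq f (Suc n) = f n \<circ> comp_seq f n"

definition multi_sensitive :: "'a::metric_space set \<Rightarrow> (nat \<Rightarrow> 'a \<Rightarrow> 'a) \<Rightarrow> bool" where
  "multi_sensitive X f \<longleftrightarrow>
     (\<exists>\<delta>>0. \<forall>k\<ge>1. \<forall>V :: nat \<Rightarrow> 'a set.
        (\<forall>i\<in>{1..k}. openin (top_of_set X) (V i) \<and> V i \<noteq> {}) \<longrightarrow>
        (\<exists>n\<ge>1. \<forall>i\<in>{1..k}. diameter (comp_seq f n ` V i) > \<delta>))"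

definition open_cover :: "'b topology \<Rightarrow> 'b set set \<Rightarrow> bool" where
  "open_cover T U \<longleftrightarrow> finite U \<and> (\<forall>u\<in>U. openin T u) \<and> \<Union>U = topspace T"

definition cover_num :: "'b topology \<Rightarrow> 'b set set \<Rightarrow> nat" where
  "cover_num T U = Inf {card V | V. V \<subseteq> U \<and> \<Union>V = topspace T}"

definition join_cover :: "'b topology \<Rightarrow> (nat \<Rightarrow> 'b \<Rightarrow> 'b) \<Rightarrow> (nat \<Rightarrow> nat) \<Rightarrow> 'b set set \<Rightarrow> nat \<Rightarrow> 'b set set" where
  "join_cover T g a U n =
     {topspace T \<inter> (\<Inter>i\<in>{1..n}. comp_seq g (a i) -` c i) | c. \<forall>i\<in>{1..n}. c i \<in> U}"

definition seq_entropy :: "'b topology \<Rightarrow> (nat \<Rightarrow> 'b \<Rightarrow> 'b) \<Rightarrow> (nat \<Rightarrow> nat) \<Rightarrow> ereal" where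
  "seq_entropy T g a =
     (SUP U\<in>{U. open_cover T U}.
        limsup (\<lambda>n. ereal (ln (real (cover_num T (join_cover T g a U n))) / real n)))"

text \<open>The set S of strictly increasing sequences a_1 < a_2 < ... of nonnegative integers
  (the value a 0 is irrelevant).\<close>
definition seqS :: "(nat \<Rightarrow> nat) set" where
  "seqS = {a. strict_mono_on {1..} a}"

definition sup_seq_entropy :: "'b topology \<Rightarrow> (nat \<Rightarrow> 'b \<Rightarrow> 'b) \<Rightarrow> ereal" where
  "sup_seq_entropy T g = (SUP a\<in>seqS. seq_entropy T g a)"

definition prob_measures :: "'a::metric_space set \<Rightarrow> 'a measure set" where
  "prob_measures X = {\<mu>. prob_space \<mu> \<and> sets \<mu> = sets (restrict_space borel X)}"

definition weak_star_topology :: "'a::metric_space set \<Rightarrow> 'a measure topology" where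
  "weak_star_topology X = topology_generated_by
     {{\<mu> \<in> prob_measures X. (\<integral>x. g x \<partial>\<mu>) \<in> W} | g W.
        continuous_on X (g :: 'a \<Rightarrow> real) \<and> open W}"

definition induced_maps :: "'a::metric_space set \<Rightarrow> (nat \<Rightarrow> 'a \<Rightarrow> 'a) \<Rightarrow> nat \<Rightarrow> 'a measure \<Rightarrow> 'a measure" where
  "induced_maps X f n \<mu> = distr \<mu> (restrict_space borel X) (f n)"

end

theory Submission
  imports Defs
begin

text \<open>
  Multi-sensitivity and total boundedness yield two open sets \<open>W\<^sub>0\<close>, \<open>W\<^sub>1\<close> at positive
  distance and a nonempty open \<open>V\<close> such that every finite family of nonempty open subsets of
  \<open>V\<close> is carried by a single \<open>f\<^sub>0\<^sup>n\<close> to meet both \<open>W\<^sub>0\<close> and \<open>W\<^sub>1\<close>: otherwise, refining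
  over the finitely many pairs of \<open>\<delta>/4\<close>-balls at distance \<open>> \<delta>/2\<close>, one obtains a finite family
  none of whose members is ever stretched to diameter \<open>> \<delta>\<close> simultaneously.
  Iterating this property along a binary tree of open sets produces times
  \<open>a\<^sub>1 < a\<^sub>2 < \<dots>\<close> along which every finite \<open>0\<close>-\<open>1\<close> pattern of visits to \<open>W\<^sub>0\<close>, \<open>W\<^sub>1\<close> is
  realised. A continuous \<open>g\<close> equal to \<open>0\<close> on \<open>W\<^sub>0\<close> and \<open>1\<close> on \<open>W\<^sub>1\<close> then takes prescribed values
  along these times, so the join of a fixed cover pulled back by \<open>g\<close> needs \<open>2\<^sup>n\<close> sets and
  \<open>h\<^sub>A \<ge> log 2\<close>. Averaging \<open>N\<close> such points gives probability measures on which
  \<open>\<mu> \<mapsto> \<integral>g d\<mu>\<close> takes any prescribed values in \<open>{0, 1/N, \<dots>, 1}\<close> along \<open>A\<close>, so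
  \<open>h\<^sub>A \<ge> log (N + 1)\<close> for the induced maps and every \<open>N\<close>.
\<close>

section \<open>Joins of covers and sequence entropy\<close>

lemma comp_seq_image_subset:
  assumes "\<And>n. f n ` S \<subseteq> S"
  shows "comp_seq f m ` S \<subseteq> S"
  using assms by (induction m) (auto simp: image_subset_iff)

lemma finite_join_cover:
  assumes "finite U"
  shows "finite (join_cover T g a U n)"
proof -
  let ?cell = "\<lambda>c. topspace T \<inter> (\<Inter>i\<in>{1..n}. comp_seq g (a i) -` c i)"
  have "join_cover T g a U n \<subseteq> ?cell ` ({1..n} \<rightarrow>\<^sub>E U)"
  proof
    fix e assume "e \<in> join_cover T g a U n"
    then obtain c where c: "\<forall>i\<in>{1..n}. c i \<in> U" and e: "e = ?cell c"
      unfolding join_cover_def by blast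
    have "restrict c {1..n} \<in> {1..n} \<rightarrow>\<^sub>E U"
      using c by auto
    moreover have "e = ?cell (restrict c {1..n})"
      unfolding e by (intro arg_cong2[where f="(\<inter>)"] refl INF_cong) simp
    ultimately show "e \<in> ?cell ` ({1..n} \<rightarrow>\<^sub>E U)"
      by blast
  qed
  moreover have "finite ({1..n} \<rightarrow>\<^sub>E U)"
    using assms by (intro finite_PiE) auto
  ultimately show ?thesis
    by (rule finite_subset[OF _ finite_imageI])
qed

lemma Union_join_cover:
  assumes "open_cover T U" and "\<And>m. g m ` topspace T \<subseteq> topspace T"
  shows "\<Union>(join_cover T g a U n) = topspace T"
proof
  show "\<Union>(join_cover T g a U n) \<subseteq> topspace T"
    unfolding join_cover_def by auto
next
  show "topspace T \<subseteq> \<Union>(join_cover T g a U n)"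
  proof
    fix x assume x: "x \<in> topspace T"
    have "comp_seq g (a i) x \<in> topspace T" for i
      using comp_seq_image_subset[of g "topspace T", OF assms(2)] x by blast
    then have "\<forall>i. \<exists>u\<in>U. comp_seq g (a i) x \<in> u"
      using assms(1) unfolding open_cover_def by blast
    then obtain c where c: "\<forall>i. c i \<in> U \<and> comp_seq g (a i) x \<in> c i"
      using choice[of "\<lambda>i u. u \<in> U \<and> comp_seq g (a i) x \<in> u"] by blast
    then have "topspace T \<inter> (\<Inter>i\<in>{1..n}. comp_seq g (a i) -` c i) \<in> join_cover T g a U n"
      unfolding join_cover_def by blast
    then show "x \<in> \<Union>(join_cover T g a U n)"
      using x c by blast
  qed
qed

lemma cover_num_attained:
  assumes "\<Union>J = topspace T"
  obtains V where "V \<subseteq> J" "\<Union>V = topspace T" "cover_num T J = card V"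
proof -
  let ?S = "{card V | V. V \<subseteq> J \<and> \<Union>V = topspace T}"
  have "card J \<in> ?S"
    using assms by (intro CollectI exI[of _ J]) simp
  then have "?S \<noteq> {}"
    by (rule ex_in_conv[THEN iffD1, OF exI])
  then have "Inf ?S \<in> ?S"
    by (rule Inf_nat_def1)
  then obtain V where "V \<subseteq> J" "\<Union>V = topspace T" "Inf ?S = card V"
    by blast
  then show thesis
    using that[of V] unfolding cover_num_def by simp
qed

lemma card_le_cover_num_join_cover:
  assumes cover: "open_cover T U" and invariant: "\<And>m. g m ` topspace T \<subseteq> topspace T"
    and points: "\<phi> ` I \<subseteq> topspace T"
    and separated: "\<And>u v. u \<in> I \<Longrightarrow> v \<in> I \<Longrightarrow> u \<noteq> v \<Longrightarrow>
        \<exists>i\<in>{1..n}. \<forall>c\<in>U. \<not> (comp_seq g (a i) (\<phi> u) \<in> c \<and> comp_seq g (a i) (\<phi> v) \<in> c)"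
  shows "card I \<le> cover_num T (join_cover T g a U n)"
proof -
  let ?J = "join_cover T g a U n"
  obtain V where V: "V \<subseteq> ?J" "\<Union>V = topspace T" "cover_num T ?J = card V"
    by (rule cover_num_attained[OF Union_join_cover[OF cover invariant, where a=a and n=n]])
  have "finite ?J"
    using finite_join_cover cover unfolding open_cover_def by blast
  then have "finite V"
    using V(1) by (rule rev_finite_subset)
  have "\<forall>u\<in>I. \<exists>e\<in>V. \<phi> u \<in> e"
    using points V(2) by blast
  then obtain e where e: "\<forall>u\<in>I. e u \<in> V \<and> \<phi> u \<in> e u"
    using bchoice[of I "\<lambda>u e. e \<in> V \<and> \<phi> u \<in> e"] by blast
  have "e ` I \<subseteq> V"
    using e by blast
  moreover have "inj_on e I"
  proof (rule inj_onI, rule ccontr)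
    fix u v assume uv: "u \<in> I" "v \<in> I" "e u = e v" "u \<noteq> v"
    then obtain i where i: "i \<in> {1..n}"
      and apart: "\<forall>c\<in>U. \<not> (comp_seq g (a i) (\<phi> u) \<in> c \<and> comp_seq g (a i) (\<phi> v) \<in> c)"
      using separated by blast
    have "e u \<in> ?J"
      using e uv V(1) by blast
    then obtain c where c: "\<forall>i\<in>{1..n}. c i \<in> U"
      and eu: "e u = topspace T \<inter> (\<Inter>i\<in>{1..n}. comp_seq g (a i) -` c i)"
      unfolding join_cover_def by blast
    have "\<phi> u \<in> e u" "\<phi> v \<in> e u"
      using e uv by auto
    then have "comp_seq g (a i) (\<phi> u) \<in> c i" "comp_seq g (a i) (\<phi> v) \<in> c i"
      using eu i by auto
    then show False
      using apart c i by blast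
  qed
  ultimately show ?thesis
    using card_inj_on_le[of e I V] \<open>finite V\<close> V(3) by simp
qed

lemma ln_le_seq_entropy:
  assumes cover: "open_cover T U" and "K \<ge> 1"
    and growth: "\<And>n. n \<ge> 1 \<Longrightarrow> K ^ n \<le> real (cover_num T (join_cover T g a U n))"
  shows "ereal (ln K) \<le> seq_entropy T g a"
proof -
  have "ln K \<le> ln (real (cover_num T (join_cover T g a U n))) / real n" if "n \<ge> 1" for n
  proof -
    have "real n * ln K = ln (K ^ n)"
      using \<open>K \<ge> 1\<close> by (simp add: ln_realpow)
    also have "\<dots> \<le> ln (real (cover_num T (join_cover T g a U n)))"
      using growth[OF that] \<open>K \<ge> 1\<close> by (intro ln_mono) auto
    finally show ?thesis
      using that by (simp add: pos_le_divide_eq mult.commute)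
  qed
  then have "ereal (ln K) \<le> limsup (\<lambda>n. ereal (ln (real (cover_num T (join_cover T g a U n))) / real n))"
    by (intro le_Limsup eventually_sequentiallyI[of 1]) auto
  also have "\<dots> \<le> seq_entropy T g a"
    unfolding seq_entropy_def using cover by (intro SUP_upper) simp
  finally show ?thesis .
qed

section \<open>Grid covers and interpolating sequences\<close>

definition grid_cover :: "nat \<Rightarrow> real set set" where
  "grid_cover N = insert {..<0} (insert {1<..} ((\<lambda>k. ball (real k / real N) (1 / real N)) ` {0..N}))"

lemma finite_grid_cover: "finite (grid_cover N)"
  unfolding grid_cover_def by simp

lemma open_grid_cover: "W \<in> grid_cover N \<Longrightarrow> open W"
  unfolding grid_cover_def by auto

lemma Union_grid_cover:
  assumes "N \<ge> 1"
  shows "\<Union>(grid_cover N) = UNIV"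
proof -
  have "\<exists>W\<in>grid_cover N. r \<in> W" if r: "0 \<le> r" "r \<le> 1" for r :: real
  proof -
    define k where "k = nat \<lfloor>r * real N\<rfloor>"
    have "real k = real_of_int \<lfloor>r * real N\<rfloor>"
      using r unfolding k_def by simp
    then have "real k \<le> r * real N" "r * real N < real k + 1"
      by linarith+
    moreover have "r * real N \<le> real N"
      using r mult_right_mono[of r 1 "real N"] by simp
    ultimately have "k \<le> N" and "\<bar>r * real N - real k\<bar> < 1"
      by linarith+
    then have "r \<in> ball (real k / real N) (1 / real N)"
      using assms by (simp add: dist_real_def field_simps abs_minus_commute)
    then show ?thesis
      using \<open>k \<le> N\<close> unfolding grid_cover_def by auto
  qed
  moreover have "r \<in> {..<0} \<union> {1<..}" if "\<not> (0 \<le> r \<and> r \<le> 1)" for r :: real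
    using that by auto
  ultimately show ?thesis
    unfolding grid_cover_def by blast
qed

lemma grid_cover_separates:
  assumes "N \<ge> 1" "W \<in> grid_cover N" "j \<le> N" "k \<le> N"
    and "real j / real N \<in> W" "real k / real N \<in> W"
  shows "j = k"
proof -
  have grid_points_01: "0 \<le> real m / real N \<and> real m / real N \<le> 1" if "m \<le> N" for m
    using that \<open>N \<ge> 1\<close> by (simp add: divide_le_eq_1)
  have close_to_centre: "c = m" if "real m / real N \<in> ball (real c / real N) (1 / real N)" for c m
  proof -
    have "\<bar>real c - real m\<bar> / real N < 1 / real N"
      using that by (simp add: dist_real_def diff_divide_distrib[symmetric])
    then have "\<bar>real c - real m\<bar> < 1"
      using \<open>N \<ge> 1\<close> by (simp add: divide_less_cancel)
    then show ?thesis
      by linarith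
  qed
  from \<open>W \<in> grid_cover N\<close> consider "W = {..<0}" | "W = {1<..}"
    | c where "W = ball (real c / real N) (1 / real N)"
    unfolding grid_cover_def by blast
  then show ?thesis
  proof cases
    case (3 c)
    then show ?thesis
      using close_to_centre[of j c] close_to_centre[of k c] assms(5,6) by simp
  qed (use assms(5) grid_points_01[OF \<open>j \<le> N\<close>] in auto)
qed

lemma open_cover_grid_preimage:
  assumes "continuous_map T euclideanreal h" "N \<ge> 1"
  shows "open_cover T ((\<lambda>W. {x \<in> topspace T. h x \<in> W}) ` grid_cover N)"
proof -
  have "openin T {x \<in> topspace T. h x \<in> W}" if "W \<in> grid_cover N" for W
    using openin_continuous_map_preimage[OF assms(1)] open_grid_cover[OF that] by simp
  moreover have "\<Union>((\<lambda>W. {x \<in> topspace T. h x \<in> W}) ` grid_cover N) = topspace T"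
    using Union_grid_cover[OF assms(2)] by blast
  ultimately show ?thesis
    unfolding open_cover_def using finite_grid_cover by blast
qed

text \<open>For \<open>N = 1\<close> this says that the level sets \<open>h = 0\<close> and \<open>h = 1\<close> form an independence pair
  along \<open>a\<close>: every finite \<open>0\<close>-\<open>1\<close> pattern of visits is realised by some point.\<close>
definition interpolating_seq ::
    "'b set \<Rightarrow> ('b \<Rightarrow> real) \<Rightarrow> (nat \<Rightarrow> 'b \<Rightarrow> 'b) \<Rightarrow> (nat \<Rightarrow> nat) \<Rightarrow> nat \<Rightarrow> bool" where
  "interpolating_seq S h g a N \<longleftrightarrow>
     (\<forall>n w. (\<forall>i\<in>{1..n}. w i \<le> N) \<longrightarrow>
        (\<exists>x\<in>S. \<forall>i\<in>{1..n}. h (comp_seq g (a i) x) = real (w i) / real N))"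

lemma ln_le_seq_entropy_if_interpolating:
  assumes h: "continuous_map T euclideanreal h"
    and invariant: "\<And>m. g m ` topspace T \<subseteq> topspace T"
    and "N \<ge> 1" and interpolating: "interpolating_seq (topspace T) h g a N"
  shows "ereal (ln (real N + 1)) \<le> seq_entropy T g a"
proof -
  define U where "U = (\<lambda>W. {x \<in> topspace T. h x \<in> W}) ` grid_cover N"
  have cover: "open_cover T U"
    unfolding U_def using open_cover_grid_preimage[OF h \<open>N \<ge> 1\<close>] .
  have "card ({1..n} \<rightarrow>\<^sub>E {0..N}) \<le> cover_num T (join_cover T g a U n)" for n
  proof -
    let ?W = "{1..n} \<rightarrow>\<^sub>E {0..N}"
    have "\<forall>w. \<exists>x. w \<in> ?W \<longrightarrow> x \<in> topspace T \<and> (\<forall>i\<in>{1..n}. h (comp_seq g (a i) x) = real (w i) / real N)"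
      using interpolating unfolding interpolating_seq_def PiE_iff by fastforce
    from choice[OF this] obtain pt where "\<forall>w. w \<in> ?W \<longrightarrow> pt w \<in> topspace T \<and>
        (\<forall>i\<in>{1..n}. h (comp_seq g (a i) (pt w)) = real (w i) / real N)"
      by blast
    then have pt: "\<And>w. w \<in> ?W \<Longrightarrow> pt w \<in> topspace T"
      "\<And>w i. w \<in> ?W \<Longrightarrow> i \<in> {1..n} \<Longrightarrow> h (comp_seq g (a i) (pt w)) = real (w i) / real N"
      by auto
    show ?thesis
    proof (rule card_le_cover_num_join_cover[OF cover invariant])
      show "pt ` ?W \<subseteq> topspace T"
        using pt(1) by blast
      fix u v assume uv: "u \<in> ?W" "v \<in> ?W" "u \<noteq> v"
      then obtain i where i: "i \<in> {1..n}" "u i \<noteq> v i"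
        using PiE_ext by blast
      have "u i = v i" if "c \<in> U" "comp_seq g (a i) (pt u) \<in> c" "comp_seq g (a i) (pt v) \<in> c" for c
      proof -
        obtain W where "W \<in> grid_cover N" "c = {x \<in> topspace T. h x \<in> W}"
          using \<open>c \<in> U\<close> unfolding U_def by blast
        then show ?thesis
          using that uv i(1) pt(2)[of u i] pt(2)[of v i] \<open>N \<ge> 1\<close>
          by (auto intro: grid_cover_separates simp: PiE_iff)
      qed
      then show "\<exists>i\<in>{1..n}. \<forall>c\<in>U. \<not> (comp_seq g (a i) (pt u) \<in> c \<and> comp_seq g (a i) (pt v) \<in> c)"
        using i by blast
    qed
  qed
  moreover have "real (card ({1..n} \<rightarrow>\<^sub>E {0..N})) = (real N + 1) ^ n" for n
    by (simp add: card_PiE add.commute)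
  ultimately have "(real N + 1) ^ n \<le> real (cover_num T (join_cover T g a U n))" for n
    by (metis of_nat_mono)
  then show ?thesis
    using ln_le_seq_entropy[OF cover] by simp
qed

lemma comp_seq_branch_independent:
  fixes L :: "nat \<Rightarrow> bool list \<Rightarrow> 'a set" and g :: "nat \<Rightarrow> 'a \<Rightarrow> 'b"
  assumes nested: "\<And>n bs b. length bs = n \<Longrightarrow> L (Suc n) (bs @ [b]) \<subseteq> L n bs"
    and hits: "\<And>n bs b. length bs = n \<Longrightarrow> g (t (Suc n)) ` L (Suc n) (bs @ [b]) \<subseteq> W b"
    and "x \<in> L n (map s [1..<Suc n])" and "i \<in> {1..n}"
  shows "g (t i) x \<in> W (s i)"
  using assms(3,4)
proof (induction n arbitrary: x)
  case 0
  then show ?case by simp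
next
  case (Suc n)
  have branch: "map s [1..<Suc (Suc n)] = map s [1..<Suc n] @ [s (Suc n)]"
    by simp
  have len: "length (map s [1..<Suc n]) = n"
    by simp
  show ?case
  proof (cases "i = Suc n")
    case True
    then show ?thesis
      using hits[OF len, of "s (Suc n)"] Suc.prems(1) unfolding branch by blast
  next
    case False
    then show ?thesis
      using Suc.IH[of x] Suc.prems nested[OF len, of "s (Suc n)"]
      unfolding branch by auto
  qed
qed

lemma independent_pair_imp_interpolating:
  fixes W :: "bool \<Rightarrow> 'a::metric_space set" and a :: "nat \<Rightarrow> nat"
  assumes "\<gamma> > 0" and gap: "\<And>x y. x \<in> W False \<Longrightarrow> y \<in> W True \<Longrightarrow> \<gamma> \<le> dist x y"
    and independent: "\<And>n s. \<exists>x\<in>X. \<forall>i\<in>{1..n}. comp_seq f (a i) x \<in> W (s i)"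
  shows "\<exists>g. continuous_on UNIV g \<and> interpolating_seq X g f a 1"
proof -
  define g where "g x = min 1 (infdist x (W False) / \<gamma>)" for x
  have "W False \<noteq> {}"
    using independent[of 1 "\<lambda>_. False"] by auto
  have g_False: "g x = 0" if "x \<in> W False" for x
    using that unfolding g_def by simp
  have g_True: "g y = 1" if "y \<in> W True" for y
  proof -
    have "\<gamma> \<le> infdist y (W False)"
      using gap[OF _ that] \<open>W False \<noteq> {}\<close>
      by (auto simp: infdist_notempty dist_commute intro: cINF_greatest)
    then show ?thesis
      using \<open>\<gamma> > 0\<close> unfolding g_def by simp
  qed
  have "continuous_on UNIV g"
    unfolding g_def using \<open>\<gamma> > 0\<close> by (intro continuous_intros) auto
  moreover have "interpolating_seq X g f a 1"
    unfolding interpolating_seq_def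
  proof (intro allI impI)
    fix n and w :: "nat \<Rightarrow> nat"
    assume w: "\<forall>i\<in>{1..n}. w i \<le> 1"
    obtain x where "x \<in> X" and x: "\<forall>i\<in>{1..n}. comp_seq f (a i) x \<in> W (w i = 1)"
      using independent[of n "\<lambda>i. w i = 1"] by blast
    have "g (comp_seq f (a i) x) = real (w i) / real 1" if i: "i \<in> {1..n}" for i
    proof -
      have "w i = 0 \<or> w i = 1"
        using w i by fastforce
      moreover have "comp_seq f (a i) x \<in> W (w i = 1)"
        using x i by blast
      ultimately show ?thesis
        using g_False g_True by auto
    qed
    then show "\<exists>x\<in>X. \<forall>i\<in>{1..n}. g (comp_seq f (a i) x) = real (w i) / real 1"
      using \<open>x \<in> X\<close> by blast
  qed
  ultimately show ?thesis
    by blast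
qed

lemma diameter_gt_imp_far_points:
  fixes S :: "'a::metric_space set"
  assumes "\<delta> < diameter S" "0 < \<delta>"
  obtains u v where "u \<in> S" "v \<in> S" "\<delta> < dist u v"
proof -
  have "S \<noteq> {}"
    using assms by (auto simp: diameter_def)
  have "\<exists>u\<in>S. \<exists>v\<in>S. \<delta> < dist u v"
  proof (rule ccontr)
    assume "\<not> ?thesis"
    then have "diameter S \<le> \<delta>"
      unfolding diameter_def using \<open>S \<noteq> {}\<close> by (auto intro!: cSUP_least simp: not_less)
    then show False
      using assms(1) by simp
  qed
  then show ?thesis
    using that by blast
qed

lemma far_points_in_ball_pair:
  fixes u v :: "'a::metric_space"
  assumes "X \<subseteq> (\<Union>c\<in>C. ball c (\<delta>/4))" "u \<in> X" "v \<in> X" "\<delta> < dist u v"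
  obtains c c' where "c \<in> C" "c' \<in> C" "\<delta>/2 < dist c c'" "u \<in> ball c (\<delta>/4)" "v \<in> ball c' (\<delta>/4)"
proof -
  obtain c c' where c: "c \<in> C" "u \<in> ball c (\<delta>/4)" and c': "c' \<in> C" "v \<in> ball c' (\<delta>/4)"
    using assms(1-3) by blast
  have "\<delta> < dist c u + dist c c' + dist c' v"
    using assms(4) dist_triangle[of u v c] dist_triangle[of c v c'] by (simp add: dist_commute)
  then have "\<delta>/2 < dist c c'"
    using c(2) c'(2) by simp
  then show thesis
    using that c c' by blast
qed

section \<open>Multi-sensitive systems have interpolating sequences\<close>

locale nonautonomous_system =
  fixes X :: "'a::metric_space set" and f :: "nat \<Rightarrow> 'a \<Rightarrow> 'a"
  assumes continuous_on_f: "\<And>n. continuous_on X (f n)"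
    and f_image_subset: "\<And>n. f n ` X \<subseteq> X"
begin

lemma comp_seq_image_subset_X: "comp_seq f m ` X \<subseteq> X"
  using comp_seq_image_subset[OF f_image_subset] .

lemma continuous_on_comp_seq: "continuous_on X (comp_seq f m)"
proof (induction m)
  case 0
  then show ?case by simp
next
  case (Suc m)
  then show ?case
    using continuous_on_compose2[OF continuous_on_f Suc comp_seq_image_subset_X] by simp
qed

lemma openin_comp_seq_preimage: "open W \<Longrightarrow> openin (top_of_set X) (X \<inter> comp_seq f m -` W)"
  by (rule continuous_openin_preimage_gen[OF continuous_on_comp_seq])

definition nonempty_open_subsets :: "'a set \<Rightarrow> 'a set set" where
  "nonempty_open_subsets V = {U. openin (top_of_set X) U \<and> U \<noteq> {} \<and> U \<subseteq> V}"

lemma nonempty_open_subsets_trans: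
  "U \<in> nonempty_open_subsets V \<Longrightarrow> V \<subseteq> V' \<Longrightarrow> U \<in> nonempty_open_subsets V'"
  unfolding nonempty_open_subsets_def by blast

lemma exists_subset_with_close_orbits:
  assumes "U \<in> nonempty_open_subsets V" and "\<gamma> > 0"
  shows "\<exists>U'\<in>nonempty_open_subsets U. \<forall>m\<le>M. \<forall>y\<in>U'. \<forall>z\<in>U'. dist (comp_seq f m y) (comp_seq f m z) < \<gamma>"
proof -
  obtain x where x: "x \<in> U" and U: "openin (top_of_set X) U"
    using assms(1) unfolding nonempty_open_subsets_def by blast
  define U' where "U' = U \<inter> (\<Inter>m\<le>M. X \<inter> comp_seq f m -` ball (comp_seq f m x) (\<gamma>/2))"
  have preimage_open: "openin (top_of_set X) (X \<inter> comp_seq f m -` ball (comp_seq f m x) (\<gamma>/2))" for m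
    by (rule openin_comp_seq_preimage) simp
  have "openin (top_of_set X) (\<Inter>m\<le>M. X \<inter> comp_seq f m -` ball (comp_seq f m x) (\<gamma>/2))"
    by (rule openin_INT2) (simp_all add: preimage_open)
  then have "openin (top_of_set X) U'"
    unfolding U'_def using U by (rule openin_Int[rotated])
  moreover have "x \<in> U'"
    unfolding U'_def using x openin_imp_subset[OF U] \<open>\<gamma> > 0\<close> by auto
  moreover have "dist (comp_seq f m y) (comp_seq f m z) < \<gamma>" if "m \<le> M" "y \<in> U'" "z \<in> U'" for m y z
  proof -
    have "dist (comp_seq f m y) (comp_seq f m x) < \<gamma>/2" "dist (comp_seq f m z) (comp_seq f m x) < \<gamma>/2"
      using that unfolding U'_def by (auto simp: dist_commute)
    then show ?thesis
      using dist_triangle_half_l by blast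
  qed
  ultimately show ?thesis
    unfolding nonempty_open_subsets_def U'_def by blast
qed

definition meets_both :: "nat \<Rightarrow> 'a set \<Rightarrow> (bool \<Rightarrow> 'a set) \<Rightarrow> bool" where
  "meets_both n U W \<longleftrightarrow> (\<forall>b. comp_seq f n ` U \<inter> W b \<noteq> {})"

lemma meets_both_mono: "meets_both n U' W \<Longrightarrow> U' \<subseteq> U \<Longrightarrow> meets_both n U W"
  unfolding meets_both_def by blast

definition spreads_to :: "'a set \<Rightarrow> (bool \<Rightarrow> 'a set) \<Rightarrow> bool" where
  "spreads_to V W \<longleftrightarrow>
     (\<forall>F. finite F \<and> F \<subseteq> nonempty_open_subsets V \<longrightarrow> (\<exists>n. \<forall>U\<in>F. meets_both n U W))"

lemma meets_both_imp_later:
  assumes "meets_both t' U W"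
    and close: "\<forall>m\<le>t. \<forall>y\<in>U. \<forall>z\<in>U. dist (comp_seq f m y) (comp_seq f m z) < \<gamma>"
    and gap: "\<And>x y. x \<in> W False \<Longrightarrow> y \<in> W True \<Longrightarrow> \<gamma> \<le> dist x y"
  shows "t < t'"
proof (rule ccontr)
  assume "\<not> t < t'"
  obtain y z where "y \<in> U" "z \<in> U" "comp_seq f t' y \<in> W False" "comp_seq f t' z \<in> W True"
    using assms(1) unfolding meets_both_def by blast
  moreover have "t' \<le> t"
    using \<open>\<not> t < t'\<close> by simp
  ultimately have "dist (comp_seq f t' y) (comp_seq f t' z) < \<gamma>"
    using close by blast
  moreover have "\<gamma> \<le> dist (comp_seq f t' y) (comp_seq f t' z)"
    using gap \<open>comp_seq f t' y \<in> W False\<close> \<open>comp_seq f t' z \<in> W True\<close> .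
  ultimately show False
    by simp
qed

text \<open>Shrinking the sets first, so that their orbits stay \<open>\<gamma>\<close>-close up to time \<open>t\<close>, forces the
  common time provided by \<open>spreads_to\<close> to exceed \<open>t\<close>.\<close>
lemma spreads_to_split:
  assumes spreads: "spreads_to V W" and W: "\<And>b. open (W b)"
    and "\<gamma> > 0" and gap: "\<And>x y. x \<in> W False \<Longrightarrow> y \<in> W True \<Longrightarrow> \<gamma> \<le> dist x y"
    and "finite B" "B \<noteq> {}" and L: "\<And>\<beta>. \<beta> \<in> B \<Longrightarrow> L \<beta> \<in> nonempty_open_subsets V"
  shows "\<exists>t'>t. \<exists>L'. \<forall>\<beta>\<in>B. \<forall>b. L' \<beta> b \<in> nonempty_open_subsets (L \<beta>) \<and> comp_seq f t' ` L' \<beta> b \<subseteq> W b"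
proof -
  have "\<forall>\<beta>\<in>B. \<exists>U. U \<in> nonempty_open_subsets (L \<beta>) \<and>
      (\<forall>m\<le>t. \<forall>y\<in>U. \<forall>z\<in>U. dist (comp_seq f m y) (comp_seq f m z) < \<gamma>)"
    using exists_subset_with_close_orbits[OF L \<open>\<gamma> > 0\<close>] by blast
  from bchoice[OF this] obtain L0 where L0: "\<forall>\<beta>\<in>B. L0 \<beta> \<in> nonempty_open_subsets (L \<beta>) \<and>
      (\<forall>m\<le>t. \<forall>y\<in>L0 \<beta>. \<forall>z\<in>L0 \<beta>. dist (comp_seq f m y) (comp_seq f m z) < \<gamma>)"
    by blast
  have "L0 ` B \<subseteq> nonempty_open_subsets V"
    using L0 L unfolding nonempty_open_subsets_def by blast
  then have "\<exists>n. \<forall>U\<in>L0 ` B. meets_both n U W"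
    using spreads[unfolded spreads_to_def, rule_format, of "L0 ` B"] \<open>finite B\<close> by blast
  then obtain t' where meets: "\<And>\<beta>. \<beta> \<in> B \<Longrightarrow> meets_both t' (L0 \<beta>) W"
    by blast
  obtain \<beta> where "\<beta> \<in> B"
    using \<open>B \<noteq> {}\<close> by blast
  then have "\<forall>m\<le>t. \<forall>y\<in>L0 \<beta>. \<forall>z\<in>L0 \<beta>. dist (comp_seq f m y) (comp_seq f m z) < \<gamma>"
    using L0 by blast
  then have "t < t'"
    by (rule meets_both_imp_later[OF meets[OF \<open>\<beta> \<in> B\<close>] _ gap])
  define L' where "L' \<beta> b = L0 \<beta> \<inter> (X \<inter> comp_seq f t' -` W b)" for \<beta> b
  have "L' \<beta> b \<in> nonempty_open_subsets (L \<beta>)" if "\<beta> \<in> B" for \<beta> b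
  proof -
    have "openin (top_of_set X) (L0 \<beta>)" "L0 \<beta> \<subseteq> L \<beta>"
      using L0 that unfolding nonempty_open_subsets_def by auto
    moreover have "L' \<beta> b \<noteq> {}"
      using meets[OF that] openin_imp_subset[OF \<open>openin (top_of_set X) (L0 \<beta>)\<close>]
      unfolding meets_both_def L'_def by fastforce
    ultimately show ?thesis
      unfolding nonempty_open_subsets_def L'_def
      using openin_comp_seq_preimage[OF W] by blast
  qed
  moreover have "comp_seq f t' ` L' \<beta> b \<subseteq> W b" for \<beta> b
    unfolding L'_def by blast
  ultimately show ?thesis
    using \<open>t < t'\<close> by blast
qed

lemma spreads_to_refine_level:
  assumes spreads: "spreads_to V W" and W: "\<And>b. open (W b)"
    and "\<gamma> > 0" and gap: "\<And>x y. x \<in> W False \<Longrightarrow> y \<in> W True \<Longrightarrow> \<gamma> \<le> dist x y"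
    and L: "\<forall>bs. length bs = n \<longrightarrow> L bs \<in> nonempty_open_subsets V"
  shows "\<exists>t'>t. \<exists>L'. (\<forall>cs. length cs = Suc n \<longrightarrow> L' cs \<in> nonempty_open_subsets V) \<and>
           (\<forall>bs b. length bs = n \<longrightarrow> L' (bs @ [b]) \<subseteq> L bs \<and> comp_seq f t' ` L' (bs @ [b]) \<subseteq> W b)"
proof -
  let ?B = "{bs :: bool list. length bs = n}"
  have "finite ?B" "?B \<noteq> {}"
    using finite_lists_length_eq[of "UNIV :: bool set" n] by (auto intro: exI[of _ "replicate n True"])
  then have "\<exists>t'>t. \<exists>L'. \<forall>bs\<in>?B. \<forall>b. L' bs b \<in> nonempty_open_subsets (L bs) \<and> comp_seq f t' ` L' bs b \<subseteq> W b"
    using L by (intro spreads_to_split[OF spreads W \<open>\<gamma> > 0\<close> gap]) auto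
  then obtain t' L' where "t < t'"
    and L': "\<forall>bs\<in>?B. \<forall>b. L' bs b \<in> nonempty_open_subsets (L bs) \<and> comp_seq f t' ` L' bs b \<subseteq> W b"
    by blast
  define L'' where "L'' cs = L' (butlast cs) (last cs)" for cs
  have "L'' cs \<in> nonempty_open_subsets V" if "length cs = Suc n" for cs
  proof -
    have "length (butlast cs) = n"
      using that by simp
    then have "L'' cs \<in> nonempty_open_subsets (L (butlast cs))" "L (butlast cs) \<subseteq> V"
      using L' L unfolding L''_def nonempty_open_subsets_def by auto
    then show ?thesis
      by (rule nonempty_open_subsets_trans)
  qed
  moreover have "L'' (bs @ [b]) \<subseteq> L bs \<and> comp_seq f t' ` L'' (bs @ [b]) \<subseteq> W b" if "length bs = n" for bs b
    using L' that unfolding L''_def nonempty_open_subsets_def by auto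
  ultimately show ?thesis
    using \<open>t < t'\<close> by blast
qed

lemma spreads_to_imp_independent:
  assumes spreads: "spreads_to V W" and W: "\<And>b. open (W b)"
    and "\<gamma> > 0" and gap: "\<And>x y. x \<in> W False \<Longrightarrow> y \<in> W True \<Longrightarrow> \<gamma> \<le> dist x y"
    and V: "V \<in> nonempty_open_subsets X"
  shows "\<exists>a :: nat \<Rightarrow> nat. strict_mono a \<and> (\<forall>n s. \<exists>x\<in>X. \<forall>i\<in>{1..n}. comp_seq f (a i) x \<in> W (s i))"
proof -
  define P where "P n tL \<longleftrightarrow> (\<forall>bs. length bs = n \<longrightarrow> snd tL bs \<in> nonempty_open_subsets V)"
    for n and tL :: "nat \<times> (bool list \<Rightarrow> 'a set)"
  define Q where "Q n tL tL' \<longleftrightarrow> fst tL < fst tL' \<and> (\<forall>bs b. length bs = n \<longrightarrow>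
      snd tL' (bs @ [b]) \<subseteq> snd tL bs \<and> comp_seq f (fst tL') ` snd tL' (bs @ [b]) \<subseteq> W b)"
    for n and tL tL' :: "nat \<times> (bool list \<Rightarrow> 'a set)"
  have "P 0 (0, \<lambda>_. V)"
    unfolding P_def using V unfolding nonempty_open_subsets_def by simp
  moreover have "\<exists>tL'. P (Suc n) tL' \<and> Q n (t, L) tL'" if Pn: "P n (t, L)" for n t L
  proof -
    have "\<forall>bs. length bs = n \<longrightarrow> L bs \<in> nonempty_open_subsets V"
      using Pn unfolding P_def by simp
    then obtain t' L' where "t < t'" "\<forall>cs. length cs = Suc n \<longrightarrow> L' cs \<in> nonempty_open_subsets V"
      "\<forall>bs b. length bs = n \<longrightarrow> L' (bs @ [b]) \<subseteq> L bs \<and> comp_seq f t' ` L' (bs @ [b]) \<subseteq> W b"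
      using spreads_to_refine_level[OF spreads W \<open>\<gamma> > 0\<close> gap, of n L t] by blast
    then show ?thesis
      unfolding P_def Q_def by (intro exI[of _ "(t', L')"]) simp
  qed
  ultimately obtain tL where P: "\<And>n. P n (tL n)" and Q: "\<And>n. Q n (tL n) (tL (Suc n))"
    using dependent_nat_choice[of P Q] by (metis prod.collapse)
  define a where "a n = fst (tL n)" for n
  have "strict_mono a"
    unfolding strict_mono_Suc_iff a_def using Q unfolding Q_def by blast
  moreover have "\<exists>x\<in>X. \<forall>i\<in>{1..n}. comp_seq f (a i) x \<in> W (s i)" for n s
  proof -
    obtain x where x: "x \<in> snd (tL n) (map s [1..<Suc n])"
      using P[of n] unfolding P_def nonempty_open_subsets_def by fastforce
    moreover have "snd (tL n) (map s [1..<Suc n]) \<subseteq> V" "V \<subseteq> X"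
      using P[of n] V unfolding P_def nonempty_open_subsets_def by simp_all
    ultimately show ?thesis
      using comp_seq_branch_independent[of "\<lambda>n. snd (tL n)" "comp_seq f" a W, OF _ _ x] Q
      unfolding Q_def a_def by (meson subsetD)
  qed
  ultimately show ?thesis
    by blast
qed

lemma multi_sensitive_finite_family:
  assumes "multi_sensitive X f"
  shows "\<exists>\<delta>>0. \<forall>F. finite F \<and> F \<noteq> {} \<and> F \<subseteq> nonempty_open_subsets X \<longrightarrow>
           (\<exists>n. \<forall>U\<in>F. \<delta> < diameter (comp_seq f n ` U))"
proof -
  obtain \<delta> where "\<delta> > 0" and sensitive: "\<forall>k::nat\<ge>1. \<forall>V. (\<forall>i\<in>{1..k}. openin (top_of_set X) (V i) \<and> V i \<noteq> {}) \<longrightarrow>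
      (\<exists>n\<ge>1. \<forall>i\<in>{1..k}. \<delta> < diameter (comp_seq f n ` V i))"
    using assms unfolding multi_sensitive_def by blast
  have "\<exists>n. \<forall>U\<in>F. \<delta> < diameter (comp_seq f n ` U)"
    if "finite F" "F \<noteq> {}" "F \<subseteq> nonempty_open_subsets X" for F
  proof -
    obtain V where V: "bij_betw V {1..card F} F"
      using ex_bij_betw_nat_finite_1[OF \<open>finite F\<close>] by blast
    have "card F \<ge> 1"
      using that by (simp add: Suc_le_eq card_gt_0_iff)
    moreover have "\<forall>i\<in>{1..card F}. openin (top_of_set X) (V i) \<and> V i \<noteq> {}"
      using bij_betw_apply[OF V] \<open>F \<subseteq> nonempty_open_subsets X\<close>
      unfolding nonempty_open_subsets_def by blast
    ultimately obtain n where n: "\<forall>i\<in>{1..card F}. \<delta> < diameter (comp_seq f n ` V i)"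
      using sensitive by blast
    have "\<delta> < diameter (comp_seq f n ` U)" if "U \<in> F" for U
    proof -
      obtain i where "i \<in> {1..card F}" "U = V i"
        using bij_betw_imp_surj_on[OF V] \<open>U \<in> F\<close> by blast
      then show ?thesis
        using n by simp
    qed
    then show ?thesis
      by blast
  qed
  with \<open>\<delta> > 0\<close> show ?thesis
    by blast
qed

lemma no_spreading_imp_uniform_failure:
  fixes W :: "'q \<Rightarrow> bool \<Rightarrow> 'a set"
  assumes "finite Q"
    and no_spreading: "\<And>q V. q \<in> Q \<Longrightarrow> V \<in> nonempty_open_subsets X \<Longrightarrow> \<not> spreads_to V (W q)"
    and "V \<in> nonempty_open_subsets X"
  shows "\<exists>F. finite F \<and> F \<subseteq> nonempty_open_subsets V \<and> (\<forall>n. \<exists>U\<in>F. \<forall>q\<in>Q. \<not> meets_both n U (W q))"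
  using assms
proof (induction Q arbitrary: V rule: finite_induct)
  case empty
  then show ?case
    by (intro exI[of _ "{V}"]) (auto simp: nonempty_open_subsets_def)
next
  case (insert p Q)
  have "\<not> spreads_to V (W p)"
    using insert.prems(1)[of p V] insert.prems(2) by simp
  then have "\<exists>F. finite F \<and> F \<subseteq> nonempty_open_subsets V \<and> (\<forall>n. \<exists>U\<in>F. \<not> meets_both n U (W p))"
    unfolding spreads_to_def by simp
  then obtain F where "finite F" and F: "F \<subseteq> nonempty_open_subsets V"
    and fails_p: "\<And>n. \<exists>U\<in>F. \<not> meets_both n U (W p)"
    by blast
  have "\<forall>U\<in>F. \<exists>G. finite G \<and> G \<subseteq> nonempty_open_subsets U \<and> (\<forall>n. \<exists>U'\<in>G. \<forall>q\<in>Q. \<not> meets_both n U' (W q))"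
  proof
    fix U assume "U \<in> F"
    then have "U \<in> nonempty_open_subsets X"
      using F insert.prems(2) unfolding nonempty_open_subsets_def by blast
    then show "\<exists>G. finite G \<and> G \<subseteq> nonempty_open_subsets U \<and> (\<forall>n. \<exists>U'\<in>G. \<forall>q\<in>Q. \<not> meets_both n U' (W q))"
      using insert.IH[OF insert.prems(1)] by blast
  qed
  from bchoice[OF this] obtain G where G: "\<forall>U\<in>F. finite (G U) \<and> G U \<subseteq> nonempty_open_subsets U \<and>
      (\<forall>n. \<exists>U'\<in>G U. \<forall>q\<in>Q. \<not> meets_both n U' (W q))"
    by blast
  have "G U \<subseteq> nonempty_open_subsets V" if "U \<in> F" for U
    using G F that unfolding nonempty_open_subsets_def by blast
  then have "\<Union>(G ` F) \<subseteq> nonempty_open_subsets V"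
    by blast
  moreover have "\<exists>U'\<in>\<Union>(G ` F). \<forall>q\<in>insert p Q. \<not> meets_both n U' (W q)" for n
  proof -
    obtain U where "U \<in> F" "\<not> meets_both n U (W p)"
      using fails_p by blast
    moreover obtain U' where "U' \<in> G U" "\<forall>q\<in>Q. \<not> meets_both n U' (W q)"
      using G \<open>U \<in> F\<close> by blast
    moreover have "U' \<subseteq> U"
      using G \<open>U \<in> F\<close> \<open>U' \<in> G U\<close> unfolding nonempty_open_subsets_def by blast
    ultimately show ?thesis
      using meets_both_mono by blast
  qed
  ultimately show ?case
    using \<open>finite F\<close> G by (intro exI[of _ "\<Union>(G ` F)"]) auto
qed

lemma spreading_ball_pair_exists:
  assumes "X \<noteq> {}" "\<delta> > 0" "finite C" and C: "X \<subseteq> (\<Union>c\<in>C. ball c (\<delta>/4))"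
    and sensitive: "\<forall>F. finite F \<and> F \<noteq> {} \<and> F \<subseteq> nonempty_open_subsets X \<longrightarrow>
      (\<exists>n. \<forall>U\<in>F. \<delta> < diameter (comp_seq f n ` U))"
  shows "\<exists>c\<in>C. \<exists>c'\<in>C. \<delta>/2 < dist c c' \<and>
           (\<exists>V\<in>nonempty_open_subsets X. spreads_to V (\<lambda>b. ball (if b then c' else c) (\<delta>/4)))"
proof (rule ccontr)
  define Q where "Q = {p \<in> C \<times> C. \<delta>/2 < dist (fst p) (snd p)}"
  define W where "W p b = ball (if b then snd p else fst p) (\<delta>/4)" for p :: "'a \<times> 'a" and b
  assume "\<not> ?thesis"
  then have "\<And>q V. q \<in> Q \<Longrightarrow> V \<in> nonempty_open_subsets X \<Longrightarrow> \<not> spreads_to V (W q)"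
    unfolding Q_def W_def by force
  moreover have "finite Q"
    using \<open>finite C\<close> unfolding Q_def by (auto intro: finite_subset[of _ "C \<times> C"])
  moreover have "X \<in> nonempty_open_subsets X"
    using \<open>X \<noteq> {}\<close> unfolding nonempty_open_subsets_def by simp
  ultimately obtain F where "finite F" "F \<subseteq> nonempty_open_subsets X"
    and fails: "\<And>n. \<exists>U\<in>F. \<forall>q\<in>Q. \<not> meets_both n U (W q)"
    using no_spreading_imp_uniform_failure[where Q=Q and W=W and V=X] by blast
  moreover have "F \<noteq> {}"
    using fails[of 0] by blast
  ultimately obtain n where n: "\<forall>U\<in>F. \<delta> < diameter (comp_seq f n ` U)"
    using sensitive by blast
  obtain U where "U \<in> F" and U: "\<forall>q\<in>Q. \<not> meets_both n U (W q)"
    using fails by blast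
  obtain u v where uv: "u \<in> comp_seq f n ` U" "v \<in> comp_seq f n ` U" "\<delta> < dist u v"
    using diameter_gt_imp_far_points[OF n[rule_format, OF \<open>U \<in> F\<close>] \<open>\<delta> > 0\<close>] .
  have "U \<subseteq> X"
    using \<open>U \<in> F\<close> \<open>F \<subseteq> nonempty_open_subsets X\<close> unfolding nonempty_open_subsets_def by blast
  then have "u \<in> X" "v \<in> X"
    using uv comp_seq_image_subset_X by blast+
  then obtain c c' where "c \<in> C" "c' \<in> C" "\<delta>/2 < dist c c'"
    and c: "u \<in> ball c (\<delta>/4)" and c': "v \<in> ball c' (\<delta>/4)"
    using far_points_in_ball_pair[OF C _ _ uv(3)] by blast
  then have "(c, c') \<in> Q"
    unfolding Q_def by simp
  moreover have "meets_both n U (W (c, c'))"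
    using uv(1,2) c c' unfolding meets_both_def W_def by auto
  ultimately show False
    using U by blast
qed

lemma multi_sensitive_imp_spreading_pair:
  assumes "compact X" "X \<noteq> {}" "multi_sensitive X f"
  obtains W \<gamma> V where "\<And>b. open (W b)" "\<gamma> > 0" "\<And>x y. x \<in> W False \<Longrightarrow> y \<in> W True \<Longrightarrow> \<gamma> \<le> dist x y"
    "V \<in> nonempty_open_subsets X" "spreads_to V W"
proof -
  obtain \<delta> where "\<delta> > 0" and sensitive: "\<forall>F. finite F \<and> F \<noteq> {} \<and> F \<subseteq> nonempty_open_subsets X \<longrightarrow>
      (\<exists>n. \<forall>U\<in>F. \<delta> < diameter (comp_seq f n ` U))"
    using multi_sensitive_finite_family[OF assms(3)] by blast
  have cover: "X \<subseteq> (\<Union>c\<in>X. ball c (\<delta>/4))"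
    using \<open>\<delta> > 0\<close> by auto
  obtain C where "C \<subseteq> X" "finite C" and C: "X \<subseteq> (\<Union>c\<in>C. ball c (\<delta>/4))"
    by (rule compactE_image[OF \<open>compact X\<close> _ cover]) simp
  obtain c c' V where "\<delta>/2 < dist c c'" "V \<in> nonempty_open_subsets X"
    and spreads: "spreads_to V (\<lambda>b. ball (if b then c' else c) (\<delta>/4))"
    using spreading_ball_pair_exists[OF \<open>X \<noteq> {}\<close> \<open>\<delta> > 0\<close> \<open>finite C\<close> C sensitive] by blast
  moreover have "dist c c' - \<delta>/2 \<le> dist x y" if "dist c x < \<delta>/4" "dist c' y < \<delta>/4" for x y
    using that dist_triangle[of c c' x] dist_triangle[of x c' y] by (simp add: dist_commute)
  ultimately show thesis
    using that[of "\<lambda>b. ball (if b then c' else c) (\<delta>/4)" "dist c c' - \<delta>/2" V] by simp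
qed

lemma multi_sensitive_imp_interpolating:
  assumes "compact X" "X \<noteq> {}" "multi_sensitive X f"
  shows "\<exists>a g. strict_mono a \<and> continuous_on X g \<and> interpolating_seq X g f a 1"
proof -
  obtain W \<gamma> V where W: "\<And>b. open (W b)" and "\<gamma> > 0"
    and gap: "\<And>x y. x \<in> W False \<Longrightarrow> y \<in> W True \<Longrightarrow> \<gamma> \<le> dist x y"
    and V: "V \<in> nonempty_open_subsets X" and "spreads_to V W"
    using multi_sensitive_imp_spreading_pair[OF assms] by metis
  obtain a :: "nat \<Rightarrow> nat" where "strict_mono a"
    and independent: "\<forall>n s. \<exists>x\<in>X. \<forall>i\<in>{1..n}. comp_seq f (a i) x \<in> W (s i)"
    using spreads_to_imp_independent[OF \<open>spreads_to V W\<close> W \<open>\<gamma> > 0\<close> gap V] by blast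
  obtain g where "continuous_on UNIV g" "interpolating_seq X g f a 1"
    using independent_pair_imp_interpolating[OF \<open>\<gamma> > 0\<close> gap] independent by blast
  then show ?thesis
    using \<open>strict_mono a\<close> continuous_on_subset by blast
qed

end

section \<open>Induced maps on probability measures\<close>

lemma measurable_continuous_self_map:
  assumes "continuous_on X h" "h ` X \<subseteq> X"
  shows "h \<in> restrict_space borel X \<rightarrow>\<^sub>M restrict_space borel X"
proof (rule measurable_restrict_space2)
  show "h \<in> space (restrict_space borel X) \<rightarrow> X"
    using assms(2) by (auto simp: space_restrict_space)
  show "h \<in> borel_measurable (restrict_space borel X)"
    by (rule borel_measurable_continuous_on_restrict[OF assms(1)])
qed

lemma measurable_uniform_count_measure_restrict:
  assumes "p ` A \<subseteq> X"
  shows "p \<in> uniform_count_measure A \<rightarrow>\<^sub>M restrict_space borel X"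
proof -
  have "uniform_count_measure A \<rightarrow>\<^sub>M restrict_space borel X = count_space A \<rightarrow>\<^sub>M restrict_space borel X"
    by (rule measurable_cong_sets[OF sets_uniform_count_measure_count_space refl])
  then show ?thesis
    using assms by (auto simp: space_restrict_space)
qed

lemma integral_distr_uniform_count_measure:
  fixes g :: "'a::metric_space \<Rightarrow> real"
  assumes "finite A" "p ` A \<subseteq> X" "continuous_on X g"
  shows "(\<integral>x. g x \<partial>distr (uniform_count_measure A) (restrict_space borel X) p) = (\<Sum>l\<in>A. g (p l)) / card A"
  using measurable_uniform_count_measure_restrict[OF assms(2)]
    borel_measurable_continuous_on_restrict[OF assms(3)] assms(1)
  by (simp add: integral_distr integral_uniform_count_measure)

lemma topspace_weak_star_topology: "topspace (weak_star_topology X) = prob_measures X"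
proof -
  let ?S = "{{\<mu> \<in> prob_measures X. (\<integral>x. g x \<partial>\<mu>) \<in> W} | g W. continuous_on X (g :: 'a \<Rightarrow> real) \<and> open W}"
  have "prob_measures X = {\<mu> \<in> prob_measures X. (\<integral>x. (\<lambda>_. 0::real) x \<partial>\<mu>) \<in> UNIV}"
    by simp
  moreover have "continuous_on X (\<lambda>_::'a. 0::real) \<and> open (UNIV :: real set)"
    by simp
  ultimately have "prob_measures X \<in> ?S"
    by blast
  moreover have "\<Union>?S \<subseteq> prob_measures X"
    by blast
  ultimately have "\<Union>?S = prob_measures X"
    by blast
  then show ?thesis
    unfolding weak_star_topology_def by simp
qed

lemma continuous_map_weak_star_integral:
  fixes g :: "'a::metric_space \<Rightarrow> real"
  assumes "continuous_on X g"
  shows "continuous_map (weak_star_topology X) euclideanreal (\<lambda>\<mu>. \<integral>x. g x \<partial>\<mu>)"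
  unfolding continuous_map_def topspace_weak_star_topology
proof (intro conjI allI impI)
  fix W :: "real set"
  assume "openin euclideanreal W"
  then have "{\<mu> \<in> prob_measures X. (\<integral>x. g x \<partial>\<mu>) \<in> W} \<in>
      {{\<mu> \<in> prob_measures X. (\<integral>x. g x \<partial>\<mu>) \<in> W} | g W. continuous_on X (g :: 'a \<Rightarrow> real) \<and> open W}"
    using assms by auto
  then show "openin (weak_star_topology X) {\<mu> \<in> prob_measures X. (\<integral>x. g x \<partial>\<mu>) \<in> W}"
    unfolding weak_star_topology_def openin_topology_generated_by_iff
    by (rule generate_topology_on.Basis)
qed simp

context nonautonomous_system
begin

lemma induced_maps_prob_measures:
  assumes "\<mu> \<in> prob_measures X"
  shows "induced_maps X f n \<mu> \<in> prob_measures X"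
proof -
  have "f n \<in> \<mu> \<rightarrow>\<^sub>M restrict_space borel X"
    using assms measurable_continuous_self_map[OF continuous_on_f f_image_subset]
    unfolding prob_measures_def by (simp cong: measurable_cong_sets)
  then show ?thesis
    using assms prob_space.prob_space_distr unfolding prob_measures_def induced_maps_def by auto
qed

lemma comp_seq_induced_maps:
  assumes "\<mu> \<in> prob_measures X"
  shows "comp_seq (induced_maps X f) m \<mu> = distr \<mu> (restrict_space borel X) (comp_seq f m)"
proof (induction m)
  case 0
  then show ?case
    using assms distr_id2[of "restrict_space borel X" \<mu>] unfolding prob_measures_def by (simp add: id_def)
next
  case (Suc m)
  have "comp_seq f m \<in> \<mu> \<rightarrow>\<^sub>M restrict_space borel X"
    using assms measurable_continuous_self_map[OF continuous_on_comp_seq comp_seq_image_subset_X]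
    unfolding prob_measures_def by (simp cong: measurable_cong_sets)
  then show ?case
    using Suc measurable_continuous_self_map[OF continuous_on_f f_image_subset]
    by (simp add: induced_maps_def distr_distr comp_def)
qed

text \<open>The measure realising the levels \<open>w i / N\<close> is the average of \<open>N\<close> point masses: the
  \<open>l\<close>-th point has observable \<open>1\<close> at time \<open>a i\<close> exactly when \<open>l \<le> w i\<close>.\<close>
lemma interpolating_seq_induced_maps:
  assumes "continuous_on X g" and interpolating: "interpolating_seq X g f a 1" and "N \<ge> 1"
  shows "interpolating_seq (prob_measures X) (\<lambda>\<mu>. \<integral>x. g x \<partial>\<mu>) (induced_maps X f) a N"
  unfolding interpolating_seq_def
proof (intro allI impI)
  fix n and w :: "nat \<Rightarrow> nat"
  assume w: "\<forall>i\<in>{1..n}. w i \<le> N"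
  let ?R = "restrict_space borel X" and ?M = "uniform_count_measure {1..N}"
  have "\<forall>l. \<exists>x. x \<in> X \<and> (\<forall>i\<in>{1..n}. g (comp_seq f (a i) x) = of_bool (l \<le> w i))"
  proof
    fix l
    show "\<exists>x. x \<in> X \<and> (\<forall>i\<in>{1..n}. g (comp_seq f (a i) x) = of_bool (l \<le> w i))"
      using interpolating unfolding interpolating_seq_def
      by (auto dest!: spec[of _ n] spec[of _ "\<lambda>i. if l \<le> w i then 1 else 0"])
  qed
  from choice[OF this] obtain pt where pt: "\<And>l. pt l \<in> X"
    "\<And>l i. i \<in> {1..n} \<Longrightarrow> g (comp_seq f (a i) (pt l)) = of_bool (l \<le> w i)"
    by blast
  then have pt_measurable: "pt \<in> ?M \<rightarrow>\<^sub>M ?R"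
    by (intro measurable_uniform_count_measure_restrict) auto
  define \<mu> where "\<mu> = distr ?M ?R pt"
  have "prob_space ?M"
    using \<open>N \<ge> 1\<close> by (intro prob_space_uniform_count_measure) auto
  then have "\<mu> \<in> prob_measures X"
    using pt_measurable unfolding \<mu>_def prob_measures_def by (auto intro: prob_space.prob_space_distr)
  moreover have "(\<integral>x. g x \<partial>comp_seq (induced_maps X f) (a i) \<mu>) = real (w i) / real N"
    if "i \<in> {1..n}" for i
  proof -
    have "comp_seq (induced_maps X f) (a i) \<mu> = distr \<mu> ?R (comp_seq f (a i))"
      by (rule comp_seq_induced_maps[OF \<open>\<mu> \<in> prob_measures X\<close>])
    also have "\<dots> = distr ?M ?R (comp_seq f (a i) \<circ> pt)"
      unfolding \<mu>_def using pt_measurable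
        measurable_continuous_self_map[OF continuous_on_comp_seq comp_seq_image_subset_X]
      by (simp add: distr_distr)
    also have "(\<integral>x. g x \<partial>\<dots>) = (\<Sum>l\<in>{1..N}. of_bool (l \<le> w i)) / real N"
      using pt comp_seq_image_subset_X[of "a i"] that
      by (subst integral_distr_uniform_count_measure[OF _ _ \<open>continuous_on X g\<close>]) auto
    also have "\<dots> = real (w i) / real N"
    proof -
      have "w i \<le> N"
        using w that by blast
      then have "{1..N} \<inter> {l. l \<le> w i} = {1..w i}"
        by auto
      then show ?thesis
        by simp
    qed
    finally show ?thesis .
  qed
  ultimately show "\<exists>\<mu>\<in>prob_measures X. \<forall>i\<in>{1..n}.
      (\<integral>x. g x \<partial>comp_seq (induced_maps X f) (a i) \<mu>) = real (w i) / real N"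
    by blast
qed

lemma seq_entropy_induced_maps_eq_infinity:
  assumes "continuous_on X g" and "interpolating_seq X g f a 1"
  shows "seq_entropy (weak_star_topology X) (induced_maps X f) a = \<infinity>"
proof (rule ereal_top)
  fix B :: real
  obtain N :: nat where "exp B \<le> real N" "N \<ge> 1"
    using real_arch_simple[of "exp B"] by (metis Suc_le_eq le_SucI nat_le_linear of_nat_mono order_trans zero_less_Suc)
  then have "B \<le> ln (real N + 1)"
    by (subst ln_ge_iff) auto
  also have "\<dots> \<le> seq_entropy (weak_star_topology X) (induced_maps X f) a"
    by (rule ln_le_seq_entropy_if_interpolating[OF continuous_map_weak_star_integral[OF assms(1)] _ \<open>N \<ge> 1\<close>])
      (simp_all add: topspace_weak_star_topology induced_maps_prob_measures image_subset_iff
        interpolating_seq_induced_maps[OF assms \<open>N \<ge> 1\<close>])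
  finally show "ereal B \<le> \<dots>"
    by simp
qed

end

theorem theorem6p1:
  fixes X :: "'a::metric_space set" and f :: "nat \<Rightarrow> 'a \<Rightarrow> 'a"
  assumes "compact X" and "X \<noteq> {}"
    and "\<And>n. continuous_on X (f n)" and "\<And>n. f n ` X \<subseteq> X"
    and "f 0 ` X = X"
    and "multi_sensitive X f"
  shows "\<exists>a\<in>seqS.
           sup_seq_entropy (top_of_set X) f \<ge> seq_entropy (top_of_set X) f a \<and>
           seq_entropy (top_of_set X) f a \<ge> ereal (ln 2) \<and>
           seq_entropy (weak_star_topology X) (induced_maps X f) a = \<infinity> \<and>
           sup_seq_entropy (weak_star_topology X) (induced_maps X f) = \<infinity>"
proof -
  interpret nonautonomous_system X f
    using assms(3,4) by unfold_locales
  obtain a g where "strict_mono a" "continuous_on X g" and interpolating: "interpolating_seq X g f a 1"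
    using multi_sensitive_imp_interpolating[OF assms(1,2,6)] by blast
  then have "a \<in> seqS"
    unfolding seqS_def by (simp add: strict_mono_def strict_mono_on_def)
  have "ereal (ln (real 1 + 1)) \<le> seq_entropy (top_of_set X) f a"
    using \<open>continuous_on X g\<close> interpolating f_image_subset
    by (intro ln_le_seq_entropy_if_interpolating) simp_all
  moreover have "seq_entropy (weak_star_topology X) (induced_maps X f) a = \<infinity>"
    using seq_entropy_induced_maps_eq_infinity[OF \<open>continuous_on X g\<close> interpolating] .
  moreover have "seq_entropy T h a \<le> sup_seq_entropy T h" for T and h :: "nat \<Rightarrow> 'b \<Rightarrow> 'b"
    unfolding sup_seq_entropy_def using \<open>a \<in> seqS\<close> by (rule SUP_upper)
  ultimately show ?thesis
    using \<open>a \<in> seqS\<close> by (metis one_add_one of_nat_1 ereal_infty_less_eq(1))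
qed

end
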